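(* For all $k\geq 1$ there is $N$ such that every irreducible graph $G=(V,E)$ with $|V|\geq N$ contains an element of $Irr(k)$ as an induced subgraph.
   Context: For a graph $G=(V,E)$ define $x\sim_G y$ if for all $z\in V\setminus\{x,y\}$, $xz\in E$ iff $yz\in E$; this is an equivalence relation. $G$ is irreducible if every $\sim_G$-class has size $1$. For $k\ge1$, $Irr(k)$ is the set of all graphs on the vertex set $\{a_1,\dots,a_k,b_1,\dots,b_k\}$ ($2k$ distinct vertices) such that one of the following holds: (i) for all $i,j\in[k]$, $a_ib_j\in E$ iff $i\le j$; (ii) for all $i,j\in[k]$, $a_ib_j\in E$ iff $i=j$; (iii) for all $i,j\in[k]$, $a_ib_j\in E$ iff $i\ne j$. (Edges among the $a_i$'s and among the $b_j$'s are unrestricted.) *)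

theory Defs
  imports Main
begin

definition graph :: "'a set \<Rightarrow> ('a \<Rightarrow> 'a \<Rightarrow> bool) \<Rightarrow> bool" where
  "graph V E \<longleftrightarrow> finite V \<and> (\<forall>x\<in>V. \<forall>y\<in>V. E x y \<longleftrightarrow> E y x) \<and> (\<forall>x\<in>V. \<not> E x x)"

definition twin_rel :: "'a set \<Rightarrow> ('a \<Rightarrow> 'a \<Rightarrow> bool) \<Rightarrow> 'a \<Rightarrow> 'a \<Rightarrow> bool" where
  "twin_rel V E x y \<longleftrightarrow> (\<forall>z \<in> V - {x, y}. E x z \<longleftrightarrow> E y z)"

definition irreducible :: "'a set \<Rightarrow> ('a \<Rightarrow> 'a \<Rightarrow> bool) \<Rightarrow> bool" where
  "irreducible V E \<longleftrightarrow> (\<forall>x\<in>V. card {y\<in>V. twin_rel V E x y} = 1)"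

text \<open>Vertex set of Irr(k): a_i = Inl i, b_j = Inr j, i,j in {1..k}.\<close>

definition irr_vertices :: "nat \<Rightarrow> (nat + nat) set" where
  "irr_vertices k = Inl ` {1..k} \<union> Inr ` {1..k}"

definition in_Irr :: "nat \<Rightarrow> (nat + nat \<Rightarrow> nat + nat \<Rightarrow> bool) \<Rightarrow> bool" where
  "in_Irr k H \<longleftrightarrow> graph (irr_vertices k) H \<and>
     ((\<forall>i\<in>{1..k}. \<forall>j\<in>{1..k}. H (Inl i) (Inr j) \<longleftrightarrow> i \<le> j) \<or>
      (\<forall>i\<in>{1..k}. \<forall>j\<in>{1..k}. H (Inl i) (Inr j) \<longleftrightarrow> i = j) \<or>
      (\<forall>i\<in>{1..k}. \<forall>j\<in>{1..k}. H (Inl i) (Inr j) \<longleftrightarrow> i \<noteq> j))"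

definition induced_subgraph ::
  "'b set \<Rightarrow> ('b \<Rightarrow> 'b \<Rightarrow> bool) \<Rightarrow> 'a set \<Rightarrow> ('a \<Rightarrow> 'a \<Rightarrow> bool) \<Rightarrow> bool" where
  "induced_subgraph W H V E \<longleftrightarrow>
     (\<exists>f. inj_on f W \<and> f ` W \<subseteq> V \<and> (\<forall>u\<in>W. \<forall>v\<in>W. H u v \<longleftrightarrow> E (f u) (f v)))"

end

(*
  In an irreducible graph any two vertices x, y of a vertex set U are separated by a third
  vertex z.  Keeping the larger half of U - {z} according to adjacency to z, and recording as
  s the one of x, y lying in the other half, one can repeat the step inside the kept half.
  From 2^n vertices this yields a ladder s_0, ..., s_(n-1), z_0, ..., z_(n-1): every z_i is
  adjacent to all s_j with j > i exactly when c_i holds, and to s_i exactly when it does not.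
  Ramsey's theorem for the pairs i < j, coloured by the adjacency of s_i and z_j, by whether
  z_j = s_i, and by c_i, gives k + 2 indices on which all three are constant.  The coincidence
  z_j = s_i then cannot occur, and between the s_i and the z_j one sees a matching, a
  co-matching or a half graph, possibly after exchanging the two sides.
*)

theory Submission
  imports Defs "HOL-Library.Ramsey"
begin

lemma irreducible_distinguishing_vertex:
  assumes "irreducible V E" "x \<in> V" "y \<in> V" "x \<noteq> y"
  obtains z where "z \<in> V - {x, y}" "E x z \<noteq> E y z"
proof -
  have "\<not> twin_rel V E x y"
  proof
    assume "twin_rel V E x y"
    then have "{x, y} \<subseteq> {w \<in> V. twin_rel V E x w}"
      using assms(2,3) by (auto simp: twin_rel_def)
    moreover have "card {w \<in> V. twin_rel V E x w} = 1"
      using assms(1,2) by (simp add: irreducible_def)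
    ultimately show False
      using assms(4) by (metis card_1_singletonE insert_subset singletonD)
  qed
  then show thesis
    using that by (auto simp: twin_rel_def)
qed

lemma card_le_twice_card_fibre:
  assumes "finite A"
  obtains b :: bool where "card A \<le> 2 * card {x \<in> A. P x = b}"
proof -
  have "card A = card {x \<in> A. P x = True} + card {x \<in> A. P x = False}"
    using assms by (subst card_Un_disjoint[symmetric]) (auto intro: arg_cong[where f = card])
  then show thesis
    using that[of True] that[of False] by linarith
qed

definition ladder ::
  "('a \<Rightarrow> 'a \<Rightarrow> bool) \<Rightarrow> (nat \<Rightarrow> 'a) \<Rightarrow> (nat \<Rightarrow> 'a) \<Rightarrow> (nat \<Rightarrow> bool) \<Rightarrow> nat \<Rightarrow> bool" where
  "ladder E s z c n \<longleftrightarrow>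
     (\<forall>j<n. \<forall>i\<le>j. s j \<noteq> z i) \<and>
     (\<forall>j<n. E (s j) (z j) \<longleftrightarrow> \<not> c j) \<and>
     (\<forall>i j. i < j \<longrightarrow> j < n \<longrightarrow> (E (s j) (z i) \<longleftrightarrow> c i))"

lemma ladder_Cons:
  assumes "ladder E s z c n" "s0 \<noteq> z0" "E s0 z0 \<longleftrightarrow> \<not> c0"
    and "\<forall>j<n. s j \<noteq> z0 \<and> (E (s j) z0 \<longleftrightarrow> c0)"
  shows "ladder E (case_nat s0 s) (case_nat z0 z) (case_nat c0 c) (Suc n)"
  using assms by (auto simp: ladder_def less_Suc_eq_0_disj split: nat.split)

lemma irreducible_has_ladder:
  assumes "irreducible V E" "U \<subseteq> V" "2 ^ n \<le> card U"
  shows "\<exists>s z c. s ` {..<n} \<subseteq> U \<and> z ` {..<n} \<subseteq> V \<and> ladder E s z c n"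
  using assms(2,3)
proof (induction n arbitrary: U)
  case 0
  show ?case by (simp add: ladder_def)
next
  case (Suc n)
  have two: "2 \<le> card U"
    using order.trans[OF self_le_power[of "2::nat" "Suc n"] Suc.prems(2)] by simp
  then have "finite U"
    using card.infinite by fastforce
  moreover have "\<not> card U \<le> Suc 0"
    using two by simp
  ultimately obtain x y where xy: "x \<in> U" "y \<in> U" "x \<noteq> y"
    using card_le_Suc0_iff_eq by blast
  then obtain z0 where z0: "z0 \<in> V - {x, y}" "E x z0 \<noteq> E y z0"
    using irreducible_distinguishing_vertex[OF assms(1)] Suc.prems(1) by blast
  obtain c0 where c0: "card (U - {z0}) \<le> 2 * card {u \<in> U - {z0}. E u z0 = c0}"
    using card_le_twice_card_fibre[of "U - {z0}" "\<lambda>u. E u z0"] \<open>finite U\<close> by auto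
  define U' where "U' = {u \<in> U - {z0}. E u z0 = c0}"
  have "card U - 1 \<le> card (U - {z0})"
    by (simp add: card_Diff_singleton_if)
  then have "2 ^ n \<le> card U'"
    using c0 Suc.prems(2) unfolding U'_def by simp
  moreover have "U' \<subseteq> V"
    using Suc.prems(1) by (auto simp: U'_def)
  ultimately obtain s z c where IH: "s ` {..<n} \<subseteq> U'" "z ` {..<n} \<subseteq> V" "ladder E s z c n"
    using Suc.IH by meson
  obtain s0 where s0: "s0 \<in> {x, y}" "E s0 z0 \<longleftrightarrow> \<not> c0"
    using z0(2) by blast
  have "ladder E (case_nat s0 s) (case_nat z0 z) (case_nat c0 c) (Suc n)"
    using IH(1,3) s0 z0(1) by (intro ladder_Cons) (auto simp: U'_def)
  moreover have "case_nat s0 s ` {..<Suc n} \<subseteq> U" "case_nat z0 z ` {..<Suc n} \<subseteq> V"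
    using IH(1,2) s0(1) xy z0(1) by (auto simp: U'_def less_Suc_eq_0_disj image_subset_iff)
  ultimately show ?case by blast
qed

lemma ordered_ramsey_pairs:
  fixes m :: nat
  shows "\<exists>N. \<forall>f :: nat \<Rightarrow> nat \<Rightarrow> 'c::finite. \<exists>g col.
     strict_mono_on {..<m} g \<and> g ` {..<m} \<subseteq> {..<N} \<and>
     (\<forall>i j. i < j \<longrightarrow> j < m \<longrightarrow> f (g i) (g j) = col)"
proof -
  obtain h :: "'c \<Rightarrow> nat" where h: "bij_betw h UNIV {..<card (UNIV :: 'c set)}"
    using ex_bij_betw_finite_nat[of "UNIV :: 'c set"] by (auto simp: atLeast0LessThan)
  obtain N :: nat where N: "partn_lst {..<N} (replicate (card (UNIV :: 'c set)) m) 2"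
    using ramsey_full by blast
  have "\<exists>g col. strict_mono_on {..<m} g \<and> g ` {..<m} \<subseteq> {..<N} \<and>
          (\<forall>i j. i < j \<longrightarrow> j < m \<longrightarrow> f (g i) (g j) = col)" for f :: "nat \<Rightarrow> nat \<Rightarrow> 'c"
  proof -
    define F where "F e = h (f (Min e) (Max e))" for e
    have "F \<in> [{..<N}]\<^bsup>2\<^esup> \<rightarrow> {..<card (UNIV :: 'c set)}"
      using h by (auto simp: F_def bij_betw_def)
    then obtain col H where H: "H \<in> [{..<N}]\<^bsup>m\<^esup>"
      and hom: "F ` [H]\<^bsup>2\<^esup> \<subseteq> {col}"
      by (rule partn_lstE[OF N]) auto
    define g where "g = (!) (sorted_list_of_set H)"
    have fin: "finite H" and card: "card H = m" and sub: "H \<subseteq> {..<N}"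
      using H by (auto simp: nsets_def)
    have gH: "g ` {..<m} \<subseteq> H"
      using fin card nth_mem[of _ "sorted_list_of_set H"] by (auto simp: g_def)
    have mono: "strict_mono_on {..<m} g"
      using fin card by (auto simp: g_def monotone_on_def sorted_wrt_nth_less)
    have "f (g i) (g j) = inv h col" if "i < j" "j < m" for i j
    proof -
      have lt: "g i < g j" using mono that by (auto simp: monotone_on_def)
      then have "{g i, g j} \<in> [H]\<^bsup>2\<^esup>" using gH that by auto
      then have "F {g i, g j} = col"
        using hom by blast
      then have "h (f (g i) (g j)) = col"
        using lt by (simp add: F_def)
      then show ?thesis
        using h by (metis bij_betw_imp_inj_on inv_f_f)
    qed
    then show ?thesis using mono gH sub by blast
  qed
  then show ?thesis by blast
qed

lemma ladder_comp:
  assumes "ladder E s z c n" "strict_mono_on {..<m} g" "g ` {..<m} \<subseteq> {..<n}"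
  shows "ladder E (s \<circ> g) (z \<circ> g) (c \<circ> g) m"
  using assms strict_mono_on_leD[OF assms(2)]
  unfolding ladder_def monotone_on_def by (auto simp: image_subset_iff)

lemma homogeneous_ladder_disjoint:
  assumes "ladder E s z c n" "2 < n"
    and hom: "\<forall>i j. i < j \<longrightarrow> j < n \<longrightarrow> (z j = s i \<longleftrightarrow> e)"
  shows "\<forall>i<n. \<forall>j<n. s i \<noteq> z j"
proof -
  have "E (s 1) (z 0) \<noteq> E (s 0) (z 0)"
    using assms(1,2) by (auto simp: ladder_def)
  then have "\<not> e"
    using hom[rule_format, of 0 2] hom[rule_format, of 1 2] assms(2) by auto
  then show ?thesis
    using assms(1) hom by (metis ladder_def not_le)
qed

lemma homogeneous_ladder_adjacency:
  assumes "ladder E s z c (Suc n)"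
    and hom: "\<forall>i j. i < j \<longrightarrow> j < Suc n \<longrightarrow> (E (s i) (z j) \<longleftrightarrow> d) \<and> c i = c0"
  shows "\<forall>i<Suc n. \<forall>j<n. E (s i) (z j) \<longleftrightarrow> (if i < j then d else if i = j then \<not> c0 else c0)"
proof (intro allI impI)
  fix i j assume "i < Suc n" "j < n"
  moreover have "c j = c0"
    using hom \<open>j < n\<close> by blast
  ultimately show "E (s i) (z j) \<longleftrightarrow> (if i < j then d else if i = j then \<not> c0 else c0)"
    using assms(1) hom by (auto simp: ladder_def)
qed

definition Irr_pattern :: "nat \<Rightarrow> (nat \<Rightarrow> nat \<Rightarrow> bool) \<Rightarrow> bool" where
  "Irr_pattern k R \<longleftrightarrow>
     (\<forall>i\<in>{1..k}. \<forall>j\<in>{1..k}. R i j \<longleftrightarrow> i \<le> j) \<or>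
     (\<forall>i\<in>{1..k}. \<forall>j\<in>{1..k}. R i j \<longleftrightarrow> i = j) \<or>
     (\<forall>i\<in>{1..k}. \<forall>j\<in>{1..k}. R i j \<longleftrightarrow> i \<noteq> j)"

lemma Irr_pattern_separates:
  assumes "Irr_pattern k R" "i \<in> {1..k}" "j \<in> {1..k}" "i < j"
  shows "R i i \<noteq> R j i" "R j i \<noteq> R j j"
  using assms by (auto simp: Irr_pattern_def)

lemma induced_Irr_of_pattern:
  assumes "graph V E" "A ` {1..k} \<subseteq> V" "B ` {1..k} \<subseteq> V"
    and "\<forall>i\<in>{1..k}. \<forall>j\<in>{1..k}. A i \<noteq> B j"
    and pattern: "Irr_pattern k (\<lambda>i j. E (A i) (B j))"
  shows "\<exists>H. in_Irr k H \<and> induced_subgraph (irr_vertices k) H V E"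
proof -
  define f where "f = case_sum A B"
  define H where "H u v = E (f u) (f v)" for u v
  have fV: "f ` irr_vertices k \<subseteq> V"
    using assms(2,3) by (auto simp: f_def irr_vertices_def)
  have injA: "inj_on A {1..k}"
  proof
    fix i j assume "i \<in> {1..k}" "j \<in> {1..k}" "A i = A j"
    then show "i = j"
      using Irr_pattern_separates(1)[OF pattern, of i j] Irr_pattern_separates(1)[OF pattern, of j i]
      by (cases i j rule: linorder_cases) auto
  qed
  have injB: "inj_on B {1..k}"
  proof
    fix i j assume "i \<in> {1..k}" "j \<in> {1..k}" "B i = B j"
    then show "i = j"
      using Irr_pattern_separates(2)[OF pattern, of i j] Irr_pattern_separates(2)[OF pattern, of j i]
      by (cases i j rule: linorder_cases) auto
  qed
  have inj: "inj_on f (irr_vertices k)"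
  proof
    fix u v assume "u \<in> irr_vertices k" "v \<in> irr_vertices k" "f u = f v"
    then show "u = v"
      unfolding irr_vertices_def f_def
      by (elim UnE imageE)
        (use assms(4) in \<open>fastforce simp: inj_on_eq_iff[OF injA] inj_on_eq_iff[OF injB]\<close>)+
  qed
  have "finite (irr_vertices k)"
    by (simp add: irr_vertices_def)
  then have "graph (irr_vertices k) H"
    using assms(1) fV by (simp add: graph_def H_def image_subset_iff)
  then have "in_Irr k H"
    using pattern by (simp add: in_Irr_def Irr_pattern_def H_def f_def)
  moreover have "induced_subgraph (irr_vertices k) H V E"
    unfolding induced_subgraph_def H_def using inj fV by blast
  ultimately show ?thesis by blast
qed

lemma induced_Irr_of_triangular_adjacency:
  assumes "graph V E" "s ` {..<k+2} \<subseteq> V" "z ` {..<k+2} \<subseteq> V"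
    and disjoint: "\<forall>i<k+2. \<forall>j<k+2. s i \<noteq> z j"
    and adj: "\<forall>i<k+2. \<forall>j<k+1. E (s i) (z j) \<longleftrightarrow> (if i < j then d else if i = j then \<not> c else c)"
  shows "\<exists>H. in_Irr k H \<and> induced_subgraph (irr_vertices k) H V E"
proof -
  have sub: "s ` {1..k} \<subseteq> V" "z ` {1..k} \<subseteq> V" "(\<lambda>j. s (Suc j)) ` {1..k} \<subseteq> V"
    using assms(2,3) by auto
  have disjoint_sz: "\<forall>i\<in>{1..k}. \<forall>j\<in>{1..k}. s i \<noteq> z j"
    using disjoint by auto
  have disjoint_zs: "\<forall>i\<in>{1..k}. \<forall>j\<in>{1..k}. z i \<noteq> s (Suc j)"
  proof (intro ballI)
    fix i j assume "i \<in> {1..k}" "j \<in> {1..k}"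
    then have "s (Suc j) \<noteq> z i"
      using disjoint[rule_format, of "Suc j" i] by simp
    then show "z i \<noteq> s (Suc j)"
      by (rule not_sym)
  qed
  consider "d = c" | "\<not> c" "d" | "c" "\<not> d"
    by blast
  then show ?thesis
  proof cases
    case 1
    then have "Irr_pattern k (\<lambda>i j. E (s i) (z j))"
      using adj by (cases c) (auto simp: Irr_pattern_def)
    then show ?thesis
      using induced_Irr_of_pattern[OF assms(1) sub(1,2)] disjoint_sz by blast
  next
    case 2
    then have "Irr_pattern k (\<lambda>i j. E (s i) (z j))"
      using adj by (auto simp: Irr_pattern_def)
    then show ?thesis
      using induced_Irr_of_pattern[OF assms(1) sub(1,2)] disjoint_sz by blast
  next
    case 3
    \<comment> \<open>now s i and z j are adjacent iff j < i: exchange the sides and shift the index\<close>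
    have "E (z i) (s (Suc j)) \<longleftrightarrow> i \<le> j" if "i \<in> {1..k}" "j \<in> {1..k}" for i j
    proof -
      have "E (z i) (s (Suc j)) \<longleftrightarrow> E (s (Suc j)) (z i)"
        using assms(1) sub that unfolding graph_def by blast
      also have "\<dots> \<longleftrightarrow> i \<le> j"
        using adj 3 that by auto
      finally show ?thesis .
    qed
    then have "Irr_pattern k (\<lambda>i j. E (z i) (s (Suc j)))"
      by (simp add: Irr_pattern_def)
    then show ?thesis
      using induced_Irr_of_pattern[OF assms(1) sub(2,3)] disjoint_zs by blast
  qed
qed

theorem theorem3p29:
  fixes k :: nat
  assumes "k \<ge> 1"
  shows "\<exists>N::nat. \<forall>(V::'a set) E. graph V E \<and> irreducible V E \<and> card V \<ge> N \<longrightarrow>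
           (\<exists>H. in_Irr k H \<and> induced_subgraph (irr_vertices k) H V E)"
proof -
  obtain N where ramsey: "\<forall>f :: nat \<Rightarrow> nat \<Rightarrow> bool \<times> bool \<times> bool. \<exists>g col.
      strict_mono_on {..<k+2} g \<and> g ` {..<k+2} \<subseteq> {..<N} \<and>
      (\<forall>i j. i < j \<longrightarrow> j < k+2 \<longrightarrow> f (g i) (g j) = col)"
    using ordered_ramsey_pairs by blast
  have "\<exists>H. in_Irr k H \<and> induced_subgraph (irr_vertices k) H V E"
    if G: "graph V E" "irreducible V E" "2 ^ N \<le> card V" for V :: "'a set" and E
  proof -
    obtain s z c where szc: "s ` {..<N} \<subseteq> V" "z ` {..<N} \<subseteq> V" "ladder E s z c N"
      using irreducible_has_ladder[OF G(2) order_refl G(3)] by blast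
    obtain g d e c0 where g: "strict_mono_on {..<k+2} g" "g ` {..<k+2} \<subseteq> {..<N}"
      and hom: "\<forall>i j. i < j \<longrightarrow> j < k+2 \<longrightarrow>
        (E (s (g i)) (z (g j)), z (g j) = s (g i), c (g i)) = (d, e, c0)"
      using ramsey[rule_format, of "\<lambda>i j. (E (s i) (z j), z j = s i, c i)"] by (metis prod_cases3)
    have lad: "ladder E (s \<circ> g) (z \<circ> g) (c \<circ> g) (k+2)"
      using ladder_comp[OF szc(3) g] .
    have "(s \<circ> g) ` {..<k+2} \<subseteq> V" "(z \<circ> g) ` {..<k+2} \<subseteq> V"
      using g(2) szc(1,2) by (auto simp: image_subset_iff)
    moreover have "\<forall>i<k+2. \<forall>j<k+2. (s \<circ> g) i \<noteq> (z \<circ> g) j"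
      using homogeneous_ladder_disjoint[OF lad, of e] hom assms by auto
    moreover have "\<forall>i<k+2. \<forall>j<k+1. E ((s \<circ> g) i) ((z \<circ> g) j) \<longleftrightarrow>
        (if i < j then d else if i = j then \<not> c0 else c0)"
      using homogeneous_ladder_adjacency[of E "s \<circ> g" "z \<circ> g" "c \<circ> g" "k+1" d c0] lad hom by auto
    ultimately show ?thesis
      by (rule induced_Irr_of_triangular_adjacency[OF G(1)])
  qed
  then show ?thesis by blast
qed

end
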